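(* Let $2\le k\le n$, $\ell\in\{0,\dots,n-k+1\}$ and $\lambda\in\{\ell+2,\dots,n+\ell-1\}\setminus\{n\}$. The matrix $M_\ell^\lambda$ induces the matching field $\mathcal{B}_\ell^\lambda$. In particular $\mathcal{B}_\ell^\lambda$ is a coherent matching field.
   Context: A matching field for ${\rm Gr}(k,n)$ is a choice of permutation $\Lambda(I)\in S_k$ for each $k$-subset $I=\{i_1<\dots<i_k\}$ of $[n]$. A real $k\times n$ matrix $M=(m_{ij})$ induces $\Lambda$ if for every $I$, among the terms $\mathrm{sgn}(\tau)x_{\tau(1)i_1}\cdots x_{\tau(k)i_k}$ ($\tau\in S_k$) of the minor $\det X_I$ of a $k\times n$ matrix of variables $X=(x_{ij})$, the unique term of minimal weight (weight $\sum_r m_{\tau(r),i_r}$) is the one with $\tau=\Lambda(I)$; $\Lambda$ is coherent if some matrix induces it. The intermediate matching field $\mathcal{B}_\ell^\lambda$: write $I=\{p,q,r_1,\dots,r_{k-2}\}$ with $p<q<r_1<\dots<r_{k-2}$. If $\lambda<n$: $\mathcal{B}_\ell^\lambda(I)=\mathrm{id}$ if $q\le\ell$, or $p=\ell+1<\lambda<q$, or $\ell+1<p$; otherwise $(12)$. If $\lambda>n$, set $\lambda'=\lambda-n$: $\mathcal{B}_\ell^\lambda(I)=\mathrm{id}$ if $q\le\ell$, or $p\le\lambda'<q=\ell+1$, or $\ell+1<p$; otherwise $(12)$. The matrix $M_\ell^\lambda=(m_{ij})$: let $N=n+1$. Row 1 is zero. For $3\le i\le k$, $m_{ij}=N^{i-2}(n+1-j)$.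 Row 2: if $\lambda<n$, $m_{2,j}=\ell+1-j$ for $1\le j\le\ell$, $m_{2,\ell+1}=n-\lambda+\ell+1$, $m_{2,j}=n+\ell+2-j$ for $\ell+2\le j\le\lambda$, and $m_{2,j}=n+\ell+1-j$ for $\lambda+1\le j\le n$. If $\lambda>n$ (with $\lambda'=\lambda-n$): $m_{2,j}=\ell+2-j$ for $1\le j\le\lambda'$, $m_{2,j}=\ell+1-j$ for $\lambda'+1\le j\le\ell$, $m_{2,\ell+1}=\ell-\lambda'+1$, and $m_{2,j}=n+\ell+2-j$ for $\ell+2\le j\le n$. *)

theory Defs
  imports "HOL-Combinatorics.Combinatorics"
begin

text \<open>Rows and columns are 1-indexed: a k x n matrix is a function nat => nat => real,
  only entries with row in {1..k} and column in {1..n} matter.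
  Its r-th smallest element (r = 1..k) is i_r.\<close>

definition kth_elem :: "nat set \<Rightarrow> nat \<Rightarrow> nat" where
  "kth_elem I r = sorted_list_of_set I ! (r - 1)"

definition ksubset :: "nat \<Rightarrow> nat \<Rightarrow> nat set \<Rightarrow> bool" where
  "ksubset k n I \<longleftrightarrow> I \<subseteq> {1..n} \<and> card I = k"

definition matching_field :: "nat \<Rightarrow> nat \<Rightarrow> (nat set \<Rightarrow> nat \<Rightarrow> nat) \<Rightarrow> bool" where
  "matching_field k n \<Lambda> \<longleftrightarrow> (\<forall>I. ksubset k n I \<longrightarrow> \<Lambda> I permutes {1..k})"

text \<open>Weight of the term sgn(tau) x_{tau(1) i_1} ... x_{tau(k) i_k} of det X_I.\<close>
definition term_weight :: "(nat \<Rightarrow> nat \<Rightarrow> real) \<Rightarrow> nat \<Rightarrow> nat set \<Rightarrow> (nat \<Rightarrow> nat) \<Rightarrow> real" where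
  "term_weight M k I \<tau> = (\<Sum>r = 1..k. M (\<tau> r) (kth_elem I r))"

definition induces :: "nat \<Rightarrow> nat \<Rightarrow> (nat \<Rightarrow> nat \<Rightarrow> real) \<Rightarrow> (nat set \<Rightarrow> nat \<Rightarrow> nat) \<Rightarrow> bool" where
  "induces k n M \<Lambda> \<longleftrightarrow> (\<forall>I. ksubset k n I \<longrightarrow>
      \<Lambda> I permutes {1..k} \<and>
      (\<forall>\<tau>. \<tau> permutes {1..k} \<and> \<tau> \<noteq> \<Lambda> I \<longrightarrow> term_weight M k I (\<Lambda> I) < term_weight M k I \<tau>))"

definition coherent :: "nat \<Rightarrow> nat \<Rightarrow> (nat set \<Rightarrow> nat \<Rightarrow> nat) \<Rightarrow> bool" where
  "coherent k n \<Lambda> \<longleftrightarrow> matching_field k n \<Lambda> \<and> (\<exists>M. induces k n M \<Lambda>)"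

definition B_field :: "nat \<Rightarrow> nat \<Rightarrow> nat \<Rightarrow> nat set \<Rightarrow> nat \<Rightarrow> nat" where
  "B_field n l lam I =
     (let p = kth_elem I 1; q = kth_elem I 2 in
      if lam < n then
        (if q \<le> l \<or> (p = l + 1 \<and> l + 1 < lam \<and> lam < q) \<or> l + 1 < p
         then id else Transposition.transpose 1 2)
      else
        (let lam' = lam - n in
         if q \<le> l \<or> (p \<le> lam' \<and> lam' < q \<and> q = l + 1) \<or> l + 1 < p
         then id else Transposition.transpose 1 2))"

definition M_int :: "nat \<Rightarrow> nat \<Rightarrow> nat \<Rightarrow> nat \<Rightarrow> nat \<Rightarrow> int" where
  "M_int n l lam i j =
     (let N = int n + 1; jj = int j; nn = int n; ll = int l; lm = int lam in
      if i = 1 then 0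
      else if 3 \<le> i then N ^ (i - 2) * (nn + 1 - jj)
      else if i = 2 then
        (if lam < n then
           (if 1 \<le> j \<and> j \<le> l then ll + 1 - jj
            else if j = l + 1 then nn - lm + ll + 1
            else if l + 2 \<le> j \<and> j \<le> lam then nn + ll + 2 - jj
            else nn + ll + 1 - jj)
         else
           (let lm' = int (lam - n) in
            if 1 \<le> j \<and> j \<le> lam - n then ll + 2 - jj
            else if lam - n + 1 \<le> j \<and> j \<le> l then ll + 1 - jj
            else if j = l + 1 then ll - lm' + 1
            else nn + ll + 2 - jj))
      else 0)"

definition M_mat :: "nat \<Rightarrow> nat \<Rightarrow> nat \<Rightarrow> nat \<Rightarrow> nat \<Rightarrow> real" where
  "M_mat n l lam i j = real_of_int (M_int n l lam i j)"

end

theory Submission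
  imports Defs
begin

(* Fix a k-subset with columns x_1 < ... < x_k. The term weight of tau is the assignment cost
   sum_r M (tau r) x_r, where row 1 is zero, rows i >= 3 are N^(i-2) (N - x_r) and row 2 of
   M_l^lam decreases by at most 2 per column step. B_l^lam(I) is exactly the identity or (12)
   according to whether row 2 is smaller at x_2 or at x_1. Its strict optimality is certified by
   column potentials, as in LP duality: after subtracting a suitable potential from each column,
   the entry chosen by B_l^lam(I) is the strict minimum of its row, so every other permutation
   costs strictly more. *)

lemma sum_permutation_by_rows:
  assumes "\<pi> permutes S"
  shows "(\<Sum>r\<in>S. F (\<pi> r) r) = (\<Sum>i\<in>S. F i (inv \<pi> i))"
  using sum.permute[OF assms, of "\<lambda>i. F i (inv \<pi> i)"] permutes_inverses(2)[OF assms]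
  by simp

lemma sum_permutation_strict_min:
  fixes F :: "'a \<Rightarrow> 'a \<Rightarrow> 'b::ordered_cancel_comm_monoid_add"
  assumes "finite S" and \<sigma>: "\<sigma> permutes S" and \<tau>: "\<tau> permutes S" and "\<tau> \<noteq> \<sigma>"
    and row_min: "\<And>i r. i \<in> S \<Longrightarrow> r \<in> S \<Longrightarrow> r \<noteq> inv \<sigma> i \<Longrightarrow> F i (inv \<sigma> i) < F i r"
  shows "(\<Sum>r\<in>S. F (\<sigma> r) r) < (\<Sum>r\<in>S. F (\<tau> r) r)"
proof -
  have inv_\<tau>_in: "inv \<tau> i \<in> S" if "i \<in> S" for i
    using that permutes_in_image[OF permutes_inv[OF \<tau>]] by simp
  have "inv \<tau> \<noteq> inv \<sigma>"
    using \<open>\<tau> \<noteq> \<sigma>\<close> permutes_inv_inv[OF \<sigma>] permutes_inv_inv[OF \<tau>] by force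
  then obtain i where i: "inv \<tau> i \<noteq> inv \<sigma> i" by blast
  then have "i \<in> S"
    using permutes_not_in[OF permutes_inv[OF \<sigma>]] permutes_not_in[OF permutes_inv[OF \<tau>]] by force
  have "(\<Sum>i\<in>S. F i (inv \<sigma> i)) < (\<Sum>i\<in>S. F i (inv \<tau> i))"
  proof (rule sum_strict_mono_ex1[OF \<open>finite S\<close>])
    show "\<forall>i\<in>S. F i (inv \<sigma> i) \<le> F i (inv \<tau> i)"
      using row_min inv_\<tau>_in by (fastforce intro: less_imp_le)
    show "\<exists>i\<in>S. F i (inv \<sigma> i) < F i (inv \<tau> i)"
      using row_min inv_\<tau>_in \<open>i \<in> S\<close> i by blast
  qed
  then show ?thesis
    by (simp only: sum_permutation_by_rows[OF \<sigma>] sum_permutation_by_rows[OF \<tau>])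
qed

lemma sum_slopes_less:
  fixes x t :: "nat \<Rightarrow> real"
  assumes "r < r'" and "\<And>s. r \<le> s \<Longrightarrow> s < r' \<Longrightarrow> x s < x (Suc s) \<and> t s < c"
  shows "(\<Sum>s = r..<r'. t s * (x (Suc s) - x s)) < c * (x r' - x r)"
proof -
  have "(\<Sum>s = r..<r'. t s * (x (Suc s) - x s)) < (\<Sum>s = r..<r'. c * (x (Suc s) - x s))"
    using assms by (intro sum_strict_mono) auto
  also have "\<dots> = c * (\<Sum>s = r..<r'. x (Suc s) - x s)"
    by (simp add: sum_distrib_left)
  also have "\<dots> = c * (x r' - x r)"
    using sum_Suc_diff'[of r r' x] \<open>r < r'\<close> by simp
  finally show ?thesis .
qed

lemma sum_slopes_greater:
  fixes x t :: "nat \<Rightarrow> real"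
  assumes "r < r'" and "\<And>s. r \<le> s \<Longrightarrow> s < r' \<Longrightarrow> x s < x (Suc s) \<and> c < t s"
  shows "c * (x r' - x r) < (\<Sum>s = r..<r'. t s * (x (Suc s) - x s))"
  using sum_slopes_less[of r r' x "\<lambda>s. - t s" "- c"] assms by (simp add: sum_negf)

locale layered_costs =
  fixes k :: nat and N C :: real and x b :: "nat \<Rightarrow> real"
  assumes k_ge_2: "2 \<le> k" and k_less_N: "real k < N"
    and x_less: "\<And>r s. 1 \<le> r \<Longrightarrow> r < s \<Longrightarrow> s \<le> k \<Longrightarrow> x r < x s"
    and b_slope: "\<And>r s. 1 \<le> r \<Longrightarrow> r < s \<Longrightarrow> s \<le> k \<Longrightarrow> b r - b s \<le> 2 * (x s - x r)"
    and b_12: "b 1 \<noteq> b 2"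
begin

definition cost :: "nat \<Rightarrow> nat \<Rightarrow> real" where
  "cost i r = (if i = 1 then 0 else if i = 2 then b r else N ^ (i - 2) * (C - x r))"

definition optimal_perm :: "nat \<Rightarrow> nat" where
  "optimal_perm = (if b 2 < b 1 then id else Transposition.transpose 1 2)"

(* V is piecewise linear in x with slope 3 N^(s-2) between x_s and x_(s+1). These slopes
   interleave the row weights N^(i-2), so the reduced cost N^(i-2) (C - x_r) + V r of a row
   i >= 3 is minimised exactly at column i; they also exceed 2, the slope bound of row 2. *)
definition V :: "nat \<Rightarrow> real" where
  "V r = (\<Sum>s = 2..<r. 3 * N ^ (s - 2) * (x (Suc s) - x s))"

(* The midpoint potential of column 1 makes rows 1 and 2 split columns 1 and 2 according to
   the sign of b 1 - b 2. *)
definition potential :: "nat \<Rightarrow> real" where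
  "potential r = (if r = 1 then (b 1 - b 2) / 2 else - V r)"

definition reduced_cost :: "nat \<Rightarrow> nat \<Rightarrow> real" where
  "reduced_cost i r = cost i r - potential r"

lemma V_diff:
  assumes "2 \<le> r" "r \<le> r'"
  shows "V r' - V r = (\<Sum>s = r..<r'. 3 * N ^ (s - 2) * (x (Suc s) - x s))"
proof -
  have "V r' = V r + (\<Sum>s = r..<r'. 3 * N ^ (s - 2) * (x (Suc s) - x s))"
    unfolding V_def by (rule sum.atLeastLessThan_concat[OF assms, symmetric])
  then show ?thesis by simp
qed

lemma x_step: "1 \<le> s \<Longrightarrow> s < k \<Longrightarrow> x s < x (Suc s)"
  using x_less by simp

lemma V_2 [simp]: "V 2 = 0"
  unfolding V_def by simp

lemma V_greater:
  assumes "2 < r" "r \<le> k"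
  shows "2 * (x r - x 2) < V r"
proof -
  have slopes: "x s < x (Suc s) \<and> 2 < 3 * N ^ (s - 2)" if "2 \<le> s" "s < r" for s
  proof -
    have "1 \<le> N ^ (s - 2)" using k_less_N k_ge_2 by (intro one_le_power) simp
    then show ?thesis using x_step[of s] that assms by simp
  qed
  have "2 * (x r - x 2) < (\<Sum>s = 2..<r. 3 * N ^ (s - 2) * (x (Suc s) - x s))"
    by (rule sum_slopes_greater) (use assms slopes in auto)
  then show ?thesis using V_diff[of 2 r] assms by simp
qed

lemma optimal_perm_1_2:
  "optimal_perm 1 = (if b 2 < b 1 then 1 else 2)" "optimal_perm 2 = (if b 2 < b 1 then 2 else 1)"
  unfolding optimal_perm_def by simp_all

lemma reduced_cost_rows_1_2:
  "reduced_cost 1 r = (if r = 1 then (b 2 - b 1) / 2 else V r)"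
  "reduced_cost 2 r = (if r = 1 then (b 1 + b 2) / 2 else b r + V r)"
  unfolding reduced_cost_def cost_def potential_def by (simp_all add: field_simps)

lemma reduced_cost_row_1_min:
  assumes "r \<in> {1..k}" "r \<noteq> optimal_perm 1"
  shows "reduced_cost 1 (optimal_perm 1) < reduced_cost 1 r"
proof -
  consider "r = 1" | "r = 2" | "2 < r" using assms by force
  then show ?thesis
  proof cases
    case 3
    then have "0 < V r" using V_greater[of r] x_less[of 2 r] assms by simp
    then show ?thesis
      using 3 b_12 unfolding reduced_cost_rows_1_2 optimal_perm_1_2 by auto
  qed (use assms(2) b_12 in
      \<open>unfold reduced_cost_rows_1_2 optimal_perm_1_2, auto split: if_splits\<close>)
qed

lemma reduced_cost_row_2_min:
  assumes "r \<in> {1..k}" "r \<noteq> optimal_perm 2"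
  shows "reduced_cost 2 (optimal_perm 2) < reduced_cost 2 r"
proof -
  consider "r = 1" | "r = 2" | "2 < r" using assms by force
  then show ?thesis
  proof cases
    case 3
    then have "b 2 < b r + V r" using V_greater[of r] b_slope[of 2 r] assms by simp
    then show ?thesis
      using 3 b_12 unfolding reduced_cost_rows_1_2 optimal_perm_1_2 by auto
  qed (use assms(2) b_12 in
      \<open>unfold reduced_cost_rows_1_2 optimal_perm_1_2, auto split: if_splits\<close>)
qed

lemma reduced_cost_row_ge_3_min:
  assumes "3 \<le> i" "i \<le> k" "r \<in> {1..k}" "r \<noteq> i"
  shows "reduced_cost i i < reduced_cost i r"
proof -
  define c where "c = N ^ (i - 2)"
  have "3 < N" using k_less_N assms by simp
  have "N ^ 1 \<le> c"
    unfolding c_def using \<open>3 < N\<close> assms by (intro power_increasing) auto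
  have slope_below: "3 * N ^ (s - 2) < c" if "s < i" for s
  proof -
    have "3 * N ^ (s - 2) < N ^ Suc (s - 2)" using \<open>3 < N\<close> by simp
    also have "\<dots> \<le> c"
      unfolding c_def using \<open>3 < N\<close> that assms by (intro power_increasing) auto
    finally show ?thesis .
  qed
  have slope_above: "c < 3 * N ^ (s - 2)" if "i \<le> s" for s
  proof -
    have "c \<le> N ^ (s - 2)"
      unfolding c_def using \<open>3 < N\<close> that by (intro power_increasing) auto
    then show ?thesis using \<open>N ^ 1 \<le> c\<close> \<open>3 < N\<close> by simp
  qed
  have V_below: "V i - V r' < c * (x i - x r')" if "2 \<le> r'" "r' < i" for r'
    using V_diff[of r' i] sum_slopes_less[of r' i x] slope_below x_step that assms by simp
  have cost_i: "cost i r' = c * (C - x r')" for r'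
    unfolding cost_def c_def using assms by simp
  consider "i < r" | "r = 1" | "2 \<le> r" "r < i" using assms by force
  then show ?thesis
  proof cases
    case 1
    then have "c * (x r - x i) < V r - V i"
      using V_diff[of i r] sum_slopes_greater[of i r x] slope_above x_step assms by simp
    then show ?thesis
      using 1 assms by (simp add: reduced_cost_def cost_i potential_def algebra_simps)
  next
    case 2
    have "(b 1 - b 2) / 2 \<le> x 2 - x 1" using b_slope[of 1 2] k_ge_2 by simp
    also have "\<dots> < c * (x 2 - x 1)"
      using x_less[of 1 2] k_ge_2 \<open>N ^ 1 \<le> c\<close> \<open>3 < N\<close> by simp
    finally have "V i + (b 1 - b 2) / 2 < c * (x i - x 1)"
      using V_below[of 2] assms by (simp add: algebra_simps)
    then show ?thesis
      using 2 assms by (simp add: reduced_cost_def cost_i potential_def algebra_simps)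
  next
    case 3
    then show ?thesis
      using V_below[of r] assms by (simp add: reduced_cost_def cost_i potential_def algebra_simps)
  qed
qed

lemma optimal_perm_permutes: "optimal_perm permutes {1..k}"
  unfolding optimal_perm_def using k_ge_2 by (auto intro: permutes_swap_id)

lemma optimal_perm_fixes: "3 \<le> i \<Longrightarrow> optimal_perm i = i"
  unfolding optimal_perm_def by simp

lemma inv_optimal_perm: "inv optimal_perm = optimal_perm"
  unfolding optimal_perm_def by simp

lemma optimal_perm_unique_min:
  assumes "\<tau> permutes {1..k}" "\<tau> \<noteq> optimal_perm"
  shows "(\<Sum>r = 1..k. cost (optimal_perm r) r) < (\<Sum>r = 1..k. cost (\<tau> r) r)"
proof -
  have row_min: "reduced_cost i (optimal_perm i) < reduced_cost i r"
    if "i \<in> {1..k}" "r \<in> {1..k}" "r \<noteq> optimal_perm i" for i r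
  proof -
    have "i = 1 \<or> i = 2 \<or> 3 \<le> i" using that by auto
    then consider "i = 1" | "i = 2" | "3 \<le> i" "optimal_perm i = i"
      using optimal_perm_fixes by blast
    then show ?thesis
      by cases
        (use that reduced_cost_row_1_min reduced_cost_row_2_min reduced_cost_row_ge_3_min in auto)
  qed
  have "(\<Sum>r = 1..k. reduced_cost (optimal_perm r) r) < (\<Sum>r = 1..k. reduced_cost (\<tau> r) r)"
    by (rule sum_permutation_strict_min[where F = reduced_cost, OF _ optimal_perm_permutes assms])
      (use row_min in \<open>simp_all add: inv_optimal_perm\<close>)
  then show ?thesis by (simp add: reduced_cost_def sum_subtractf)
qed

end

lemma kth_elem_bounds:
  assumes "ksubset k n I" "1 \<le> r" "r \<le> k"
  shows "1 \<le> kth_elem I r \<and> kth_elem I r \<le> n"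
proof -
  have "I \<subseteq> {1..n}" "card I = k" using assms(1) unfolding ksubset_def by auto
  then have "r - 1 < length (sorted_list_of_set I)" using assms(2,3) by simp
  then have "kth_elem I r \<in> set (sorted_list_of_set I)" unfolding kth_elem_def by (rule nth_mem)
  moreover have "finite I" using \<open>I \<subseteq> {1..n}\<close> finite_subset by blast
  ultimately show ?thesis using \<open>I \<subseteq> {1..n}\<close> by auto
qed

lemma kth_elem_less:
  assumes "ksubset k n I" "1 \<le> r" "r < r'" "r' \<le> k"
  shows "kth_elem I r < kth_elem I r'"
proof -
  have "length (sorted_list_of_set I) = k" using assms(1) unfolding ksubset_def by simp
  moreover have "sorted_wrt (<) (sorted_list_of_set I)" by simp
  ultimately show ?thesis
    unfolding kth_elem_def
    using sorted_wrt_nth_less[of "(<)" "sorted_list_of_set I" "r - 1" "r' - 1"] assms(2-4) by simp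
qed

lemma M_mat_by_rows:
  assumes "1 \<le> i"
  shows "M_mat n l lam i j = (if i = 1 then 0 else if i = 2 then M_mat n l lam 2 j
    else (real n + 1) ^ (i - 2) * (real n + 1 - real j))"
  using assms unfolding M_mat_def M_int_def Let_def by simp

lemma M_int_row_2_slope:
  assumes "1 \<le> j" "j < j'" "j' \<le> n" "l + 2 \<le> lam" "lam \<le> n + l - 1" "lam \<noteq> n"
  shows "M_int n l lam 2 j - M_int n l lam 2 j' \<le> 2 * (int j' - int j)"
  using assms unfolding M_int_def Let_def by (auto split: if_splits)

lemma B_field_eq_row_2_order:
  assumes "1 \<le> kth_elem I 1" "kth_elem I 1 < kth_elem I 2" "kth_elem I 2 \<le> n"
    and "l + 2 \<le> lam" "lam \<le> n + l - 1" "lam \<noteq> n"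
  shows "M_int n l lam 2 (kth_elem I 1) \<noteq> M_int n l lam 2 (kth_elem I 2)"
    and "B_field n l lam I = (if M_int n l lam 2 (kth_elem I 2) < M_int n l lam 2 (kth_elem I 1)
      then id else Transposition.transpose 1 2)"
  using assms unfolding B_field_def M_int_def Let_def by (auto split: if_splits)

lemma B_field_strict_min:
  assumes "2 \<le> k" "k \<le> n" and lam: "l + 2 \<le> lam" "lam \<le> n + l - 1" "lam \<noteq> n"
    and I: "ksubset k n I" and "\<tau> permutes {1..k}" "\<tau> \<noteq> B_field n l lam I"
  shows "term_weight (M_mat n l lam) k I (B_field n l lam I) < term_weight (M_mat n l lam) k I \<tau>"
proof -
  let ?x = "\<lambda>r. real (kth_elem I r)" and ?b = "\<lambda>r. M_mat n l lam 2 (kth_elem I r)"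
  have "1 \<le> kth_elem I 1" "kth_elem I 1 < kth_elem I 2" "kth_elem I 2 \<le> n"
    using kth_elem_bounds[OF I] kth_elem_less[OF I, of 1 2] \<open>2 \<le> k\<close> by auto
  note row_2_order = B_field_eq_row_2_order[OF this lam]
  interpret layered_costs k "real n + 1" "real n + 1" ?x ?b
  proof
    show "?b r - ?b s \<le> 2 * (?x s - ?x r)" if "1 \<le> r" "r < s" "s \<le> k" for r s
    proof -
      have "1 \<le> kth_elem I r" "kth_elem I r < kth_elem I s" "kth_elem I s \<le> n"
        using kth_elem_bounds[OF I] kth_elem_less[OF I] that by auto
      from M_int_row_2_slope[OF this lam] show ?thesis
        unfolding M_mat_def by (simp flip: of_int_le_iff)
    qed
  qed (use assms kth_elem_less[OF I] row_2_order(1) in \<open>auto simp: M_mat_def\<close>)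
  have weight: "term_weight (M_mat n l lam) k I \<pi> = (\<Sum>r = 1..k. cost (\<pi> r) r)"
    if "\<pi> permutes {1..k}" for \<pi>
    unfolding term_weight_def
  proof (rule sum.cong)
    fix r assume "r \<in> {1..k}"
    then have "\<pi> r \<in> {1..k}" using permutes_in_image[OF that] by simp
    then show "M_mat n l lam (\<pi> r) (kth_elem I r) = cost (\<pi> r) r"
      using M_mat_by_rows[of "\<pi> r" n l lam "kth_elem I r"] unfolding cost_def by simp
  qed simp
  have "B_field n l lam I = optimal_perm"
    using row_2_order(2) unfolding optimal_perm_def by (simp add: M_mat_def)
  then show ?thesis
    using optimal_perm_unique_min optimal_perm_permutes weight assms by simp
qed

lemma B_field_permutes: "2 \<le> k \<Longrightarrow> B_field n l lam I permutes {1..k}"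
  unfolding B_field_def Let_def by (auto intro: permutes_swap_id)

theorem proposition2p8:
  fixes k n l lam :: nat
  assumes "2 \<le> k" and "k \<le> n"
    and "l \<le> n - k + 1"
    and "l + 2 \<le> lam" and "lam \<le> n + l - 1" and "lam \<noteq> n"
  shows "induces k n (M_mat n l lam) (B_field n l lam) \<and> coherent k n (B_field n l lam)"
proof -
  have induced: "induces k n (M_mat n l lam) (B_field n l lam)"
    unfolding induces_def
    using B_field_permutes B_field_strict_min[OF assms(1,2,4-6)] assms(1) by blast
  then have "coherent k n (B_field n l lam)"
    unfolding coherent_def matching_field_def using B_field_permutes assms(1) by blast
  with induced show ?thesis by blast
qed

end
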